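(* Let ${\mathbb E}$, ${\mathbb W}$ be finite-dimensional Euclidean spaces, ${\mathcal A}:{\mathbb E}\to{\mathbb W}$ linear, $L={\mathcal A}^*({\mathbb W})\subseteq{\mathbb E}$, $\mathcal{K}\subseteq{\mathbb E}$ a convex cone and $C\in{\mathbb E}$, and suppose ${\mathcal F}=\{Z\in\mathcal{K}: Z=C-{\mathcal A}^*y \text{ for some } y\in{\mathbb W}\}\ne\emptyset$. Let $P$ denote the orthogonal projection of ${\mathbb E}$ onto $L^\perp$ (so that $P(\mathcal{K})$ is the quotient cone $\mathcal{K}/L$ and $P(C)$ represents $C/L$). Then the singularity degree of the system ${\mathcal F}$ over $\mathcal{K}$ equals the singularity degree of $\operatorname{face}(P(C),P(\mathcal{K}))$ over $P(\mathcal{K})$. Moreover, if ${\mathcal M}:{\mathbb E}\to{\mathbb F}$ is a surjective linear map with $\operatorname{Null}({\mathcal M})=L$ and $b={\mathcal M}(C)$, then ${\mathcal M}$ induces an isomorphism of the cones $\mathcal{K}/L$ and ${\mathcal M}(\mathcal{K})$, and this singularity degree also equals the singularity degree of the system $\{X\in\mathcal{K}:{\mathcal M}(X)=b\}$.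
   Context: Singularity degree of a system $\{X\in\mathcal{K}:{\mathcal M}(X)=b\}$: the minimum number $k$ of facial reduction steps ${\mathcal F}_0=\mathcal{K}$, ${\mathcal F}_{i+1}={\mathcal F}_i\cap({\mathcal M}^*v_i)^\perp$ with ${\mathcal M}^*v_i\in{\mathcal F}_i^*\setminus{\mathcal F}_i^\perp$, $\langle v_i,b\rangle=0$, reaching the smallest face of $\mathcal{K}$ containing the feasible set. For the nullspace-form system $\{Z\in\mathcal{K}:Z\in C+L\}$ the steps use exposing vectors $W_i\in{\mathcal F}_i^*\setminus{\mathcal F}_i^\perp$ with $W_i\in L^\perp$ and $\langle W_i,C\rangle=0$, reaching the smallest face of $\mathcal{K}$ containing the feasible set. Singularity degree of a face $G_t$ of a cone $G$: minimum number $d$ of steps $G_0=G$, $G_{i+1}=G_i\cap d_i^\perp$, $d_i\in G_i^*\setminus G_i^\perp$, $d_i\perp G_t$, with $G_d=G_t$. $\operatorname{face}(x,G)$ is the smallest face of $G$ containing $x$. *)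

theory Defs
  imports "HOL-Analysis.Analysis"
begin

definition dual_cone :: "'a::real_inner set \<Rightarrow> 'a set" where
  "dual_cone S = {y. \<forall>x\<in>S. 0 \<le> y \<bullet> x}"

definition annih :: "'a::real_inner set \<Rightarrow> 'a set" where
  "annih S = {y. \<forall>x\<in>S. y \<bullet> x = 0}"

definition min_face :: "'a::real_vector set \<Rightarrow> 'a set \<Rightarrow> 'a set" where
  "min_face S G = \<Inter>{F. F face_of G \<and> S \<subseteq> F}"

definition face_pt :: "'a::real_vector \<Rightarrow> 'a set \<Rightarrow> 'a set" where
  "face_pt x G = min_face {x} G"

definition orth_proj :: "'a::real_inner set \<Rightarrow> 'a \<Rightarrow> 'a" where
  "orth_proj S x = (THE p. p \<in> S \<and> x - p \<in> orthogonal_comp S)"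

definition FR_seq_std ::
  "('a::euclidean_space \<Rightarrow> 'c::euclidean_space) \<Rightarrow> 'c \<Rightarrow> 'a set \<Rightarrow> nat \<Rightarrow> bool" where
  "FR_seq_std M b K k \<longleftrightarrow>
     (\<exists>Fs :: nat \<Rightarrow> 'a set. \<exists>vs :: nat \<Rightarrow> 'c.
        Fs 0 = K \<and>
        (\<forall>i<k. Fs (Suc i) = Fs i \<inter> annih {adjoint M (vs i)} \<and>
               adjoint M (vs i) \<in> dual_cone (Fs i) - annih (Fs i) \<and>
               vs i \<bullet> b = 0) \<and>
        Fs k = min_face {X \<in> K. M X = b} K)"

definition sing_deg_std ::
  "('a::euclidean_space \<Rightarrow> 'c::euclidean_space) \<Rightarrow> 'c \<Rightarrow> 'a set \<Rightarrow> enat" where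
  "sing_deg_std M b K = Inf (enat ` {k. FR_seq_std M b K k})"

definition FR_seq_null :: "'a::euclidean_space set \<Rightarrow> 'a \<Rightarrow> 'a set \<Rightarrow> nat \<Rightarrow> bool" where
  "FR_seq_null L C K k \<longleftrightarrow>
     (\<exists>Fs :: nat \<Rightarrow> 'a set. \<exists>Ws :: nat \<Rightarrow> 'a.
        Fs 0 = K \<and>
        (\<forall>i<k. Fs (Suc i) = Fs i \<inter> annih {Ws i} \<and>
               Ws i \<in> dual_cone (Fs i) - annih (Fs i) \<and>
               Ws i \<in> orthogonal_comp L \<and>
               Ws i \<bullet> C = 0) \<and>
        Fs k = min_face {Z \<in> K. Z \<in> (\<lambda>l. C + l) ` L} K)"

definition sing_deg_null :: "'a::euclidean_space set \<Rightarrow> 'a \<Rightarrow> 'a set \<Rightarrow> enat" where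
  "sing_deg_null L C K = Inf (enat ` {k. FR_seq_null L C K k})"

definition FR_seq_face :: "'a::euclidean_space set \<Rightarrow> 'a set \<Rightarrow> nat \<Rightarrow> bool" where
  "FR_seq_face Gt G k \<longleftrightarrow>
     (\<exists>Gs :: nat \<Rightarrow> 'a set. \<exists>ds :: nat \<Rightarrow> 'a.
        Gs 0 = G \<and>
        (\<forall>i<k. Gs (Suc i) = Gs i \<inter> annih {ds i} \<and>
               ds i \<in> dual_cone (Gs i) - annih (Gs i) \<and>
               ds i \<in> annih Gt) \<and>
        Gs k = Gt)"

definition sing_deg_face :: "'a::euclidean_space set \<Rightarrow> 'a set \<Rightarrow> enat" where
  "sing_deg_face Gt G = Inf (enat ` {k. FR_seq_face Gt G k})"

end

theory Submission
  imports Defs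
begin

text \<open>An exposing vector
  W orthogonal to L pairs identically with x and P x, and P is self-adjoint, so facial reduction
  sequences for the system K \<inter> (C + L) and for the face face(P C, P K) of P K correspond to each
  other via F \<mapsto> P F and G' \<mapsto> K \<inter> P -` G'. Both sequences end at the right face because the
  minimal face of K containing the feasible set is K \<inter> P -` face(P C, P K): every element of
  face(P C, P K) is dominated by P C in the cone P K, so its preimages are, up to positive factors,
  summands of feasible points. For a surjective M with kernel L the vectors M* v are exactly the
  vectors orthogonal to L, so the standard-form system has the same facial reduction sequences.\<close>

lemma face_of_cone_scaleR:
  assumes F: "F face_of K" and K: "cone K" and y: "y \<in> F" and c: "0 < c"
  shows "c *\<^sub>R y \<in> F"
proof (cases "c = 1 \<or> y = 0")
  case True
  then show ?thesis using y by auto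
next
  case False
  have yK: "y \<in> K" using F y face_of_imp_subset by blast
  have scaled: "d *\<^sub>R y \<in> K" if "0 \<le> d" for d using K yK that unfolding cone_def by blast
  show ?thesis
  proof (cases "c < 1")
    case True
    have "c *\<^sub>R y \<noteq> (2 - c) *\<^sub>R y" using False by auto
    moreover have "y = midpoint (c *\<^sub>R y) ((2 - c) *\<^sub>R y)"
      by (simp add: midpoint_def scaleR_add_left[symmetric])
    ultimately have "y \<in> open_segment (c *\<^sub>R y) ((2 - c) *\<^sub>R y)"
      by (metis midpoint_in_open_segment)
    then show ?thesis using face_ofD[OF F _ scaled scaled y] c True by auto
  next
    case False2: False
    have "y = (1 - (1 - 1 / c)) *\<^sub>R (c *\<^sub>R y) + (1 - 1 / c) *\<^sub>R 0"
      using c by simp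
    moreover have "0 < 1 - 1 / c" "1 - 1 / c < 1" using False False2 c by (auto simp: field_simps)
    ultimately have "y \<in> open_segment (c *\<^sub>R y) 0"
      unfolding in_segment using False c by (metis scaleR_eq_0_iff less_irrefl)
    then show ?thesis using face_ofD[OF F _ scaled scaled[of 0] y] c by auto
  qed
qed

lemma face_of_cone_add_left:
  assumes F: "F face_of K" and "convex K" "cone K" and a: "a \<in> K" and b: "b \<in> K"
    and ab: "a + b \<in> F"
  shows "a \<in> F"
proof (cases "a = b")
  case True
  then show ?thesis
    using face_of_cone_scaleR[OF F \<open>cone K\<close> ab, of "1/2"] by (simp flip: scaleR_2)
next
  case False
  have "midpoint a b \<in> F"
    using face_of_cone_scaleR[OF F \<open>cone K\<close> ab, of "1/2"] by (simp add: midpoint_def)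
  then show ?thesis using face_ofD[OF F _ a b] False midpoint_in_open_segment by blast
qed

lemma face_of_cone_dominated:
  assumes T: "convex T" "cone T" and p: "p \<in> T"
  shows "{y \<in> T. \<exists>e>0. p - e *\<^sub>R y \<in> T} face_of T" (is "?D face_of T")
proof -
  have add: "x + y \<in> T" if "x \<in> T" "y \<in> T" for x y
    using convex_cone[of T] T that by blast
  have scale: "c *\<^sub>R x \<in> T" if "x \<in> T" "0 \<le> c" for x c
    using convex_cone[of T] T that by blast
  have "convex ?D"
  proof (rule convexI)
    fix x y and u v :: real assume x: "x \<in> ?D" and y: "y \<in> ?D" and uv: "0 \<le> u" "0 \<le> v" "u + v = 1"
    obtain e1 e2 where e: "0 < e1" "p - e1 *\<^sub>R x \<in> T" "0 < e2" "p - e2 *\<^sub>R y \<in> T"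
      using x y by auto
    define a where "a = u / e1 + v / e2"
    have a: "0 < a" using e uv by (cases "u = 0") (auto simp: a_def intro: add_pos_nonneg)
    have "(u / e1) *\<^sub>R (p - e1 *\<^sub>R x) + (v / e2) *\<^sub>R (p - e2 *\<^sub>R y) \<in> T"
      using e uv by (intro add scale) auto
    also have "(u / e1) *\<^sub>R (p - e1 *\<^sub>R x) + (v / e2) *\<^sub>R (p - e2 *\<^sub>R y)
        = a *\<^sub>R p - (u *\<^sub>R x + v *\<^sub>R y)"
      using e by (simp add: a_def algebra_simps)
    finally have "(1 / a) *\<^sub>R (a *\<^sub>R p - (u *\<^sub>R x + v *\<^sub>R y)) \<in> T"
      using a by (intro scale) auto
    then have "p - (1 / a) *\<^sub>R (u *\<^sub>R x + v *\<^sub>R y) \<in> T"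
      using a by (simp add: scaleR_diff_right)
    moreover have "u *\<^sub>R x + v *\<^sub>R y \<in> T" using convexD[OF T(1)] x y uv by auto
    ultimately show "u *\<^sub>R x + v *\<^sub>R y \<in> ?D" using a by (auto intro!: exI[of _ "1 / a"])
  qed
  moreover have "a \<in> ?D" if a: "a \<in> T" and b: "b \<in> T" and ab: "x \<in> ?D" "x \<in> open_segment a b"
    for a b x
  proof -
    obtain t e where t: "0 < t" "t < 1" "x = (1 - t) *\<^sub>R a + t *\<^sub>R b"
      and e: "0 < e" "p - e *\<^sub>R x \<in> T"
      using ab unfolding in_segment by auto
    have "p - (e * (1 - t)) *\<^sub>R a = (p - e *\<^sub>R x) + (e * t) *\<^sub>R b"
      by (simp add: t(3) algebra_simps)
    also have "\<dots> \<in> T" using e t b by (intro add scale) auto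
    finally show ?thesis using a e t by (auto intro!: exI[of _ "e * (1 - t)"])
  qed
  ultimately show ?thesis
    unfolding face_of_def by (metis (lifting) mem_Collect_eq subsetI open_segment_commute)
qed

lemma face_pt_mem: "x \<in> face_pt x S"
  unfolding face_pt_def min_face_def by auto

lemma min_face_least: "F face_of K \<Longrightarrow> S \<subseteq> F \<Longrightarrow> min_face S K \<subseteq> F"
  unfolding min_face_def by auto

lemma face_pt_least: "F face_of S \<Longrightarrow> x \<in> F \<Longrightarrow> face_pt x S \<subseteq> F"
  unfolding face_pt_def by (simp add: min_face_least)

lemma face_pt_face_of:
  assumes "convex S" "x \<in> S"
  shows "face_pt x S face_of S"
  unfolding face_pt_def min_face_def
  using assms by (intro face_of_Inter) (auto intro: face_of_refl)

lemma face_pt_cone_dominated: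
  assumes "convex T" "cone T" "p \<in> T" "y \<in> face_pt p T"
  obtains e where "0 < e" "p - e *\<^sub>R y \<in> T"
proof -
  have "p - 1 *\<^sub>R p \<in> T"
    using assms(2,3) unfolding cone_def by (metis diff_self scaleR_one scale_zero_left order_refl)
  then have "p \<in> {y \<in> T. \<exists>e>0. p - e *\<^sub>R y \<in> T}"
    using assms(3) by (auto intro!: exI[of _ 1])
  then show ?thesis
    using face_pt_least[OF face_of_cone_dominated[OF assms(1-3)]] assms(4) that by blast
qed

lemma face_of_linear_vimage:
  assumes G: "G face_of f ` K" and f: "linear f" and K: "convex K"
  shows "(K \<inter> f -` G) face_of K"
proof -
  have "a \<in> K \<inter> f -` G \<and> b \<in> K \<inter> f -` G"
    if ab: "a \<in> K" "b \<in> K" and x: "x \<in> K \<inter> f -` G" "x \<in> open_segment a b" for a b x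
  proof (cases "f a = f b")
    case True
    then have "f x = f a"
      using x f by (auto simp: in_segment linear_add linear_scale simp flip: scaleR_add_left)
    then show ?thesis using ab x True by auto
  next
    case False
    then have "f x \<in> open_segment (f a) (f b)"
      using x f by (auto simp: in_segment linear_add linear_scale)
    then show ?thesis using face_ofD[OF G] ab x by auto
  qed
  moreover have "convex (K \<inter> f -` G)"
    by (intro convex_Int K convex_linear_vimage f face_of_imp_convex[OF G])
  ultimately show ?thesis unfolding face_of_def by blast
qed

lemma orthogonal_decomp_unique:
  fixes S :: "'a::euclidean_space set"
  assumes S: "subspace S" and pq: "p \<in> S" "q \<in> S" "x - p \<in> S\<^sup>\<bottom>" "x - q \<in> S\<^sup>\<bottom>"
  shows "p = q"
proof -
  have "p - q \<in> S" by (rule subspace_diff[OF S]) (use pq in auto)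
  moreover have "(x - q) - (x - p) \<in> S\<^sup>\<bottom>"
    by (rule subspace_diff[OF subspace_orthogonal_comp]) (use pq in auto)
  moreover have "(x - q) - (x - p) = p - q" by simp
  ultimately have "p - q = 0" using orthogonal_Int_0[OF S] by (metis IntI singletonD)
  then show ?thesis by simp
qed

lemma orth_proj_decomp:
  fixes S :: "'a::euclidean_space set"
  assumes S: "subspace S"
  shows "orth_proj S x \<in> S" "x - orth_proj S x \<in> S\<^sup>\<bottom>"
proof -
  have "x \<in> S + S\<^sup>\<bottom>" using subspace_sum_orthogonal_comp[OF S] by simp
  then obtain s t where st: "s \<in> S" "t \<in> S\<^sup>\<bottom>" "x = s + t"
    by (meson set_plus_elim)
  then have "\<exists>!p. p \<in> S \<and> x - p \<in> S\<^sup>\<bottom>"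
    using orthogonal_decomp_unique[OF S] by (intro ex1I[of _ s]) auto
  from theI'[OF this] show "orth_proj S x \<in> S" "x - orth_proj S x \<in> S\<^sup>\<bottom>"
    unfolding orth_proj_def by blast+
qed

lemma orth_proj_unique:
  fixes S :: "'a::euclidean_space set"
  assumes "subspace S" "p \<in> S" "x - p \<in> S\<^sup>\<bottom>"
  shows "orth_proj S x = p"
  using orthogonal_decomp_unique orth_proj_decomp assms by blast

lemma linear_orth_proj:
  fixes S :: "'a::euclidean_space set"
  assumes S: "subspace S"
  shows "linear (orth_proj S)"
proof
  note dec = orth_proj_decomp[OF S]
  fix x y :: 'a and c :: real
  show "orth_proj S (x + y) = orth_proj S x + orth_proj S y"
  proof (rule orth_proj_unique[OF S])
    show "orth_proj S x + orth_proj S y \<in> S" by (rule subspace_add[OF S dec(1) dec(1)])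
    have "(x - orth_proj S x) + (y - orth_proj S y) \<in> S\<^sup>\<bottom>"
      by (rule subspace_add[OF subspace_orthogonal_comp dec(2) dec(2)])
    then show "x + y - (orth_proj S x + orth_proj S y) \<in> S\<^sup>\<bottom>"
      by (simp add: algebra_simps)
  qed
  show "orth_proj S (c *\<^sub>R x) = c *\<^sub>R orth_proj S x"
  proof (rule orth_proj_unique[OF S])
    show "c *\<^sub>R orth_proj S x \<in> S" by (rule subspace_scale[OF S dec(1)])
    have "c *\<^sub>R (x - orth_proj S x) \<in> S\<^sup>\<bottom>"
      by (rule subspace_scale[OF subspace_orthogonal_comp dec(2)])
    then show "c *\<^sub>R x - c *\<^sub>R orth_proj S x \<in> S\<^sup>\<bottom>"
      by (simp add: scaleR_diff_right)
  qed
qed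

lemma inner_orth_proj_right:
  fixes S :: "'a::euclidean_space set"
  assumes S: "subspace S" and w: "w \<in> S"
  shows "w \<bullet> orth_proj S x = w \<bullet> x"
proof -
  have "w \<bullet> (x - orth_proj S x) = 0"
    using orth_proj_decomp(2)[OF S, of x] w by (simp add: orthogonal_comp_def orthogonal_def)
  then show ?thesis by (simp add: inner_diff_right)
qed

lemma inner_orth_proj_commute:
  fixes S :: "'a::euclidean_space set"
  assumes S: "subspace S"
  shows "orth_proj S d \<bullet> x = d \<bullet> orth_proj S x"
  using inner_orth_proj_right[OF S orth_proj_decomp(1)[OF S], of d x]
    inner_orth_proj_right[OF S orth_proj_decomp(1)[OF S], of x d]
  by (simp add: inner_commute)

lemma orth_proj_eq_iff:
  fixes S :: "'a::euclidean_space set"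
  assumes S: "subspace S"
  shows "orth_proj S x = orth_proj S y \<longleftrightarrow> x - y \<in> S\<^sup>\<bottom>"
proof
  assume "orth_proj S x = orth_proj S y"
  then have "x - y = (x - orth_proj S x) - (y - orth_proj S y)" by simp
  then show "x - y \<in> S\<^sup>\<bottom>"
    by (metis orth_proj_decomp(2)[OF S] subspace_diff subspace_orthogonal_comp)
next
  assume "x - y \<in> S\<^sup>\<bottom>"
  then have "(x - y) + (y - orth_proj S y) \<in> S\<^sup>\<bottom>"
    by (rule subspace_add[OF subspace_orthogonal_comp _ orth_proj_decomp(2)[OF S]])
  then show "orth_proj S x = orth_proj S y"
    by (intro orth_proj_unique[OF S orth_proj_decomp(1)[OF S]]) simp
qed

lemma image_Int_annih:
  assumes "\<And>x. w \<bullet> f x = w \<bullet> x"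
  shows "f ` (F \<inter> annih {w}) = f ` F \<inter> annih {w}"
  using assms by (auto simp: annih_def inner_commute)

lemma dual_cone_image_iff:
  assumes "\<And>x. w \<bullet> f x = w \<bullet> x"
  shows "w \<in> dual_cone (f ` F) \<longleftrightarrow> w \<in> dual_cone F"
  using assms by (simp add: dual_cone_def)

lemma annih_image_iff:
  assumes "\<And>x. w \<bullet> f x = w \<bullet> x"
  shows "w \<in> annih (f ` F) \<longleftrightarrow> w \<in> annih F"
  using assms by (simp add: annih_def)

locale nullspace_system =
  fixes L :: "'a::euclidean_space set" and K :: "'a set" and C :: 'a
  assumes subspace_L: "subspace L" and convex_K: "convex K" and cone_K: "cone K"
    and feasible: "\<exists>Z\<in>K. Z - C \<in> L"
begin

abbreviation P :: "'a \<Rightarrow> 'a" where "P \<equiv> orth_proj (L\<^sup>\<bottom>)"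

abbreviation G :: "'a set" where "G \<equiv> face_pt (P C) (P ` K)"

lemma P_mem: "P x \<in> L\<^sup>\<bottom>" and diff_P_mem: "x - P x \<in> L"
  using orth_proj_decomp[OF subspace_orthogonal_comp[of L], of x]
  by (simp_all add: orthogonal_comp_self[OF subspace_L])

lemma P_eq_iff: "P x = P y \<longleftrightarrow> x - y \<in> L"
  using orth_proj_eq_iff[OF subspace_orthogonal_comp[of L]] orthogonal_comp_self[OF subspace_L]
  by simp

lemma linear_P: "linear P"
  by (rule linear_orth_proj[OF subspace_orthogonal_comp])

lemma inner_P_right: "W \<in> L\<^sup>\<bottom> \<Longrightarrow> W \<bullet> P x = W \<bullet> x"
  by (rule inner_orth_proj_right[OF subspace_orthogonal_comp])

lemma inner_P_commute: "P d \<bullet> x = d \<bullet> P x"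
  by (rule inner_orth_proj_commute[OF subspace_orthogonal_comp])

lemma inner_P_commute_left: "x \<bullet> P d = P x \<bullet> d"
  by (metis inner_P_commute inner_commute)

lemma convex_PK: "convex (P ` K)"
  by (rule convex_linear_image[OF linear_P convex_K])

lemma cone_PK: "cone (P ` K)"
  using cone_K unfolding cone_def by (auto simp flip: linear_scale[OF linear_P])

lemma PC_in_PK: "P C \<in> P ` K"
  using feasible P_eq_iff by (metis image_eqI)

lemma face_G: "G face_of P ` K"
  by (rule face_pt_face_of[OF convex_PK PC_in_PK])

lemma feasible_set_eq: "{Z \<in> K. Z \<in> (\<lambda>l. C + l) ` L} = {Z \<in> K. P Z = P C}"
proof -
  have "Z \<in> (\<lambda>l. C + l) ` L \<longleftrightarrow> Z - C \<in> L" for Z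
    by (auto intro: image_eqI[of _ _ "Z - C"])
  then show ?thesis using P_eq_iff by auto
qed

lemma min_face_feasible: "min_face {Z \<in> K. Z \<in> (\<lambda>l. C + l) ` L} K = K \<inter> P -` G"
  unfolding feasible_set_eq
proof
  show "min_face {Z \<in> K. P Z = P C} K \<subseteq> K \<inter> P -` G"
    using face_of_linear_vimage[OF face_G linear_P convex_K] face_pt_mem
    by (intro min_face_least) auto
  have "x \<in> F" if F: "F face_of K" "{Z \<in> K. P Z = P C} \<subseteq> F" and x: "x \<in> K" "P x \<in> G" for F x
  proof -
    obtain e where e: "0 < e" "P C - e *\<^sub>R P x \<in> P ` K"
      using face_pt_cone_dominated[OF convex_PK cone_PK PC_in_PK x(2)] by blast
    then obtain u where u: "u \<in> K" "P u = P C - e *\<^sub>R P x" by auto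
    have ex: "e *\<^sub>R x \<in> K" using x e cone_K unfolding cone_def by auto
    have "e *\<^sub>R x + u \<in> K" using convex_cone[of K] convex_K cone_K ex u by blast
    moreover have "P (e *\<^sub>R x + u) = P C"
      using u by (simp add: linear_add[OF linear_P] linear_scale[OF linear_P])
    ultimately have "e *\<^sub>R x + u \<in> F" using F by blast
    then have "e *\<^sub>R x \<in> F" by (rule face_of_cone_add_left[OF F(1) convex_K cone_K ex u(1)])
    from face_of_cone_scaleR[OF F(1) cone_K this, of "inverse e"] show "x \<in> F" using e by simp
  qed
  then show "K \<inter> P -` G \<subseteq> min_face {Z \<in> K. P Z = P C} K"
    unfolding min_face_def by blast
qed

lemma FR_seq_null_imp_face:
  assumes "FR_seq_null L C K k"
  shows "FR_seq_face G (P ` K) k"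
proof -
  obtain Fs Ws where F0: "Fs 0 = K"
    and step: "\<And>i. i < k \<Longrightarrow> Fs (Suc i) = Fs i \<inter> annih {Ws i} \<and>
               Ws i \<in> dual_cone (Fs i) - annih (Fs i) \<and> Ws i \<in> L\<^sup>\<bottom> \<and> Ws i \<bullet> C = 0"
    and Fk: "Fs k = min_face {Z \<in> K. Z \<in> (\<lambda>l. C + l) ` L} K"
    using assms unfolding FR_seq_null_def by blast
  have inner_eq: "Ws i \<bullet> P x = Ws i \<bullet> x" if "i < k" for i x
    using inner_P_right step[OF that] by blast
  have Gk: "P ` Fs k = G"
    using Fk face_of_imp_subset[OF face_G] by (auto simp: min_face_feasible)
  show ?thesis
    unfolding FR_seq_face_def
  proof (intro exI[of _ "\<lambda>i. P ` Fs i"] exI[of _ Ws] conjI allI impI)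
    fix i assume i: "i < k"
    show "P ` Fs (Suc i) = P ` Fs i \<inter> annih {Ws i}"
      using step[OF i] image_Int_annih[OF inner_eq[OF i]] by simp
    show "Ws i \<in> dual_cone (P ` Fs i) - annih (P ` Fs i)"
      using step[OF i] dual_cone_image_iff[OF inner_eq[OF i]] annih_image_iff[OF inner_eq[OF i]]
      by blast
    have "Fs k \<subseteq> Fs (Suc i)"
      by (rule lift_Suc_antimono_le_ivl[where N = "{..<k}"]) (use i step in auto)
    then have "G \<subseteq> P ` Fs (Suc i)" using Gk by blast
    also have "\<dots> \<subseteq> annih {Ws i}"
      using step[OF i] image_Int_annih[OF inner_eq[OF i]] by simp
    finally show "Ws i \<in> annih G" by (auto simp: annih_def inner_commute)
  qed (use F0 Gk in simp_all)
qed

lemma FR_seq_face_imp_null: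
  assumes "FR_seq_face G (P ` K) k"
  shows "FR_seq_null L C K k"
proof -
  obtain Gs ds where G0: "Gs 0 = P ` K"
    and step: "\<And>i. i < k \<Longrightarrow> Gs (Suc i) = Gs i \<inter> annih {ds i} \<and>
               ds i \<in> dual_cone (Gs i) - annih (Gs i) \<and> ds i \<in> annih G"
    and Gk: "Gs k = G"
    using assms unfolding FR_seq_face_def by blast
  show ?thesis
    unfolding FR_seq_null_def
  proof (intro exI[of _ "\<lambda>i. K \<inter> P -` Gs i"] exI[of _ "\<lambda>i. P (ds i)"] conjI allI impI)
    fix i assume i: "i < k"
    show "K \<inter> P -` Gs (Suc i) = K \<inter> P -` Gs i \<inter> annih {P (ds i)}"
      using step[OF i] by (auto simp: annih_def inner_P_commute_left)
    have "Gs i \<subseteq> Gs 0"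
      by (rule lift_Suc_antimono_le_ivl[where N = "{..<k}"]) (use i step in auto)
    then have "Gs i = P ` (K \<inter> P -` Gs i)" using G0 by auto
    then have "ds i \<in> dual_cone (P ` (K \<inter> P -` Gs i)) - annih (P ` (K \<inter> P -` Gs i))"
      using step[OF i] by simp
    then show "P (ds i) \<in> dual_cone (K \<inter> P -` Gs i) - annih (K \<inter> P -` Gs i)"
      by (simp add: dual_cone_def annih_def inner_P_commute)
    show "P (ds i) \<in> L\<^sup>\<bottom>" by (rule P_mem)
    have "ds i \<bullet> P C = 0" using step[OF i] face_pt_mem unfolding annih_def by blast
    then show "P (ds i) \<bullet> C = 0" by (simp add: inner_P_commute)
  next
    show "K \<inter> P -` Gs 0 = K" using G0 by auto
    show "K \<inter> P -` Gs k = min_face {Z \<in> K. Z \<in> (\<lambda>l. C + l) ` L} K"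
      using Gk min_face_feasible by simp
  qed
qed

lemma sing_deg_null_eq_face: "sing_deg_null L C K = sing_deg_face G (P ` K)"
  unfolding sing_deg_null_def sing_deg_face_def
  using FR_seq_null_imp_face FR_seq_face_imp_null by metis

end

lemma orthogonal_comp_kernel:
  fixes M :: "'a::euclidean_space \<Rightarrow> 'c::euclidean_space"
  assumes "linear M"
  shows "{x. M x = 0}\<^sup>\<bottom> = range (adjoint M)"
proof -
  have "subspace (range (adjoint M))"
    by (rule linear_subspace_image[OF adjoint_linear[OF assms] subspace_UNIV])
  then show ?thesis
    using ker_orthogonal_comp_adjoint[OF assms] orthogonal_comp_self by (simp add: vimage_def)
qed

lemma FR_seq_std_iff_null:
  fixes M :: "'a::euclidean_space \<Rightarrow> 'c::euclidean_space"
  assumes M: "linear M" and L: "L = {x. M x = 0}"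
  shows "FR_seq_std M (M C) K k \<longleftrightarrow> FR_seq_null L C K k"
proof -
  have feasible_eq: "{X \<in> K. M X = M C} = {Z \<in> K. Z \<in> (\<lambda>l. C + l) ` L}"
    using L linear_diff[OF M] linear_add[OF M] by (force intro: image_eqI[of _ _ "X - C" for X])
  have adjoint_C: "adjoint M v \<bullet> C = v \<bullet> M C" for v
    by (simp add: adjoint_works[OF M] inner_commute)
  have range_adjoint: "L\<^sup>\<bottom> = range (adjoint M)"
    using orthogonal_comp_kernel[OF M] L by simp
  show ?thesis
  proof
    assume "FR_seq_std M (M C) K k"
    then obtain Fs vs where "Fs 0 = K"
      and "\<forall>i<k. Fs (Suc i) = Fs i \<inter> annih {adjoint M (vs i)} \<and>
               adjoint M (vs i) \<in> dual_cone (Fs i) - annih (Fs i) \<and> vs i \<bullet> M C = 0"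
      and "Fs k = min_face {X \<in> K. M X = M C} K"
      unfolding FR_seq_std_def by blast
    then show "FR_seq_null L C K k"
      unfolding FR_seq_null_def using feasible_eq range_adjoint adjoint_C
      by (intro exI[of _ Fs] exI[of _ "\<lambda>i. adjoint M (vs i)"]) auto
  next
    assume "FR_seq_null L C K k"
    then obtain Fs Ws where "Fs 0 = K"
      and step: "\<forall>i<k. Fs (Suc i) = Fs i \<inter> annih {Ws i} \<and>
               Ws i \<in> dual_cone (Fs i) - annih (Fs i) \<and> Ws i \<in> L\<^sup>\<bottom> \<and> Ws i \<bullet> C = 0"
      and "Fs k = min_face {Z \<in> K. Z \<in> (\<lambda>l. C + l) ` L} K"
      unfolding FR_seq_null_def by blast
    moreover have "\<forall>i<k. \<exists>v. adjoint M v = Ws i"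
      using step range_adjoint by (metis rangeE)
    then obtain vs where "\<forall>i<k. adjoint M (vs i) = Ws i" by metis
    ultimately show "FR_seq_std M (M C) K k"
      unfolding FR_seq_std_def using feasible_eq adjoint_C
      by (intro exI[of _ Fs] exI[of _ vs]) (metis (no_types, lifting))
  qed
qed

lemma bij_betw_orthogonal_comp_kernel:
  fixes M :: "'a::euclidean_space \<Rightarrow> 'c::euclidean_space"
  assumes M: "linear M" "surj M"
  shows "bij_betw M ({x. M x = 0}\<^sup>\<bottom>) UNIV"
proof -
  let ?N = "{x. M x = 0}"
  have N: "subspace ?N"
    using M(1) by (simp add: subspace_def linear_0 linear_add linear_scale)
  have "inj_on M (?N\<^sup>\<bottom>)"
  proof (rule inj_onI)
    fix x y assume "x \<in> ?N\<^sup>\<bottom>" "y \<in> ?N\<^sup>\<bottom>" "M x = M y"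
    then have "x - y \<in> ?N \<inter> ?N\<^sup>\<bottom>"
      using linear_diff[OF M(1)] subspace_diff[OF subspace_orthogonal_comp] by auto
    then show "x = y" using orthogonal_Int_0[OF N] by simp
  qed
  moreover have "M x \<in> M ` (?N\<^sup>\<bottom>)" for x
  proof -
    have "x - orth_proj (?N\<^sup>\<bottom>) x \<in> ?N"
      using orth_proj_decomp(2)[OF subspace_orthogonal_comp[of ?N], of x] orthogonal_comp_self[OF N]
      by simp
    then have "M x = M (orth_proj (?N\<^sup>\<bottom>) x)" using linear_diff[OF M(1)] by fastforce
    then show ?thesis by (rule image_eqI) (rule orth_proj_decomp(1)[OF subspace_orthogonal_comp])
  qed
  ultimately show ?thesis using M(2) unfolding bij_betw_def by (metis surj_def UNIV_eq_I)
qed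

theorem mainTheorem7:
  fixes A :: "'e::euclidean_space \<Rightarrow> 'w::euclidean_space"
    and K :: "'e set" and C :: 'e
  assumes linA: "linear A"
    and convK: "convex K" and coneK: "cone K"
    and feas: "{Z \<in> K. \<exists>y. Z = C - adjoint A y} \<noteq> {}"
  defines "L \<equiv> range (adjoint A)"
  defines "P \<equiv> orth_proj (orthogonal_comp L)"
  shows "sing_deg_null L C K = sing_deg_face (face_pt (P C) (P ` K)) (P ` K)
         \<and> (\<forall>(M :: 'e \<Rightarrow> 'f::euclidean_space) b.
           linear M \<and> surj M \<and> {x. M x = 0} = L \<and> b = M C \<longrightarrow>
           bij_betw M (orthogonal_comp L) UNIV \<and> M ` (P ` K) = M ` K
           \<and> (\<forall>x. M (P x) = M x)
           \<and> sing_deg_std M b K = sing_deg_face (face_pt (P C) (P ` K)) (P ` K))"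
proof -
  have "subspace L"
    unfolding L_def by (rule linear_subspace_image[OF adjoint_linear[OF linA] subspace_UNIV])
  moreover have "\<exists>Z\<in>K. Z - C \<in> L"
  proof -
    obtain y where "C - adjoint A y \<in> K" using feas by auto
    moreover have "(C - adjoint A y) - C = adjoint A (- y)"
      using linear_neg[OF adjoint_linear[OF linA]] by simp
    ultimately show ?thesis unfolding L_def by (metis rangeI)
  qed
  ultimately interpret nullspace_system L K C
    using convK coneK by unfold_locales
  have sd: "sing_deg_null L C K = sing_deg_face (face_pt (P C) (P ` K)) (P ` K)"
    unfolding P_def by (rule sing_deg_null_eq_face)
  show ?thesis
  proof (intro conjI[OF sd] allI impI)
    fix M :: "'e \<Rightarrow> 'f" and b
    assume "linear M \<and> surj M \<and> {x. M x = 0} = L \<and> b = M C"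
    then have M: "linear M" "surj M" and L: "L = {x. M x = 0}" and b: "b = M C" by auto
    have MP: "M (P x) = M x" for x
      using diff_P_mem[of x] linear_diff[OF M(1)] unfolding L P_def by auto
    have "sing_deg_std M b K = sing_deg_null L C K"
      unfolding sing_deg_std_def sing_deg_null_def b FR_seq_std_iff_null[OF M(1) L] ..
    then show "bij_betw M (L\<^sup>\<bottom>) UNIV \<and> M ` (P ` K) = M ` K \<and> (\<forall>x. M (P x) = M x)
        \<and> sing_deg_std M b K = sing_deg_face (face_pt (P C) (P ` K)) (P ` K)"
      using bij_betw_orthogonal_comp_kernel[OF M] L MP sd by (simp add: image_image)
  qed
qed

end
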